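(* Let $G$ be a graph and $\mathscr{C}$ a group-theoretical graph category. Then for all $k,l\in\mathbb{N}_0$, $$\mathrm{span}\{\hat T^G_{\mathbf{K}}\mid\mathbf{K}\in\mathscr{C}(k,l)\}=\mathrm{span}\{T^G_{\mathbf{K}}\mid\mathbf{K}\in\mathscr{C}(k,l)\}.$$
   Context: Graphs are finite, undirected, without multiple edges, loops allowed, up to isomorphism; $N_k$ is the edgeless graph on $k$ vertices; graph homomorphisms map edges (including loops) to edges. Bilabelled graph: $(K,\mathbf{a},\mathbf{b})$ with $\mathbf{a}\in V(K)^k$, $\mathbf{b}\in V(K)^l$, up to isomorphism; $\mathscr{C}(k,l)$ denotes those in $\mathscr{C}$ with $k$ inputs and $l$ outputs. Operations: tensor product $(K,\mathbf{a},\mathbf{b})\otimes(H,\mathbf{c},\mathbf{d})=(K\sqcup H,\mathbf{a}\mathbf{c},\mathbf{b}\mathbf{d})$; composition (for $|\mathbf{b}|=|\mathbf{c}|$) $(H,\mathbf{c},\mathbf{d})\cdot(K,\mathbf{a},\mathbf{b})=(H\cdot K,\mathbf{a},\mathbf{d})$ with $H\cdot K$ the quotient of $K\sqcup H$ identifying $b_i$ with $c_i$; involution swaps $\mathbf{a},\mathbf{b}$. For a partition $\pi$ of $V(K)$, $K/\pi$ has the blocks as vertices, with an edge between two (possibly equal) blocks iff there is one in $K$ between some of their elements, and $(K,\mathbf{a},\mathbf{b})/\pi=(K/\pi,q_\pi(\mathbf{a}),q_\pi(\mathbf{b}))$. A graph category is a set of bilabelled graphs containing $(N_0,\emptyset,\emptyset)$,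 $(M,(v),(v))$ and $(M,\emptyset,(v,v))$ ($M$ the one-vertex loopless graph with vertex $v$) and closed under tensor products, compositions and involution; it is group-theoretical if it is closed under all quotients $\mathbf{K}\mapsto\mathbf{K}/\pi$. With the vertices of $G$ labelled $1,\dots,n$, $[T^G_{\mathbf{K}}]_{\mathbf{j}\mathbf{i}}=\#\{\phi\colon K\to G\text{ homomorphism}\mid\phi(\mathbf{a})=\mathbf{i},\phi(\mathbf{b})=\mathbf{j}\}$, and $\hat T^G_{\mathbf{K}}$ is defined the same way counting only injective homomorphisms; both are linear maps $(\mathbb{C}^n)^{\otimes k}\to(\mathbb{C}^n)^{\otimes l}$. *)

theory Defs
  imports Complex_Main "HOL-Library.FuncSet"
begin

text \<open>Bilabelled graphs: vertex set, symmetric edge relation (loops allowed),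
input tuple and output tuple.\<close>
record 'v blg =
  verts :: "'v set"
  edges :: "('v \<times> 'v) set"
  inp :: "'v list"
  outp :: "'v list"

definition blg_wf :: "'v blg \<Rightarrow> bool" where
  "blg_wf K \<longleftrightarrow> finite (verts K) \<and> edges K \<subseteq> verts K \<times> verts K \<and> sym (edges K)
     \<and> set (inp K) \<subseteq> verts K \<and> set (outp K) \<subseteq> verts K"

definition blg_iso :: "'a blg \<Rightarrow> 'b blg \<Rightarrow> bool" where
  "blg_iso K H \<longleftrightarrow> (\<exists>f. bij_betw f (verts K) (verts H)
     \<and> (\<forall>x\<in>verts K. \<forall>y\<in>verts K. (x, y) \<in> edges K \<longleftrightarrow> (f x, f y) \<in> edges H)
     \<and> map f (inp K) = inp H \<and> map f (outp K) = outp H)"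

definition blg_tensor :: "'a blg \<Rightarrow> 'b blg \<Rightarrow> ('a + 'b) blg" where
  "blg_tensor K H = \<lparr> verts = Inl ` verts K \<union> Inr ` verts H,
     edges = map_prod Inl Inl ` edges K \<union> map_prod Inr Inr ` edges H,
     inp = map Inl (inp K) @ map Inr (inp H),
     outp = map Inl (outp K) @ map Inr (outp H) \<rparr>"

definition blg_quot :: "'v blg \<Rightarrow> ('v \<times> 'v) set \<Rightarrow> 'v set blg" where
  "blg_quot K R = \<lparr> verts = verts K // R,
     edges = {(R `` {x}, R `` {y}) | x y. (x, y) \<in> edges K},
     inp = map (\<lambda>x. R `` {x}) (inp K),
     outp = map (\<lambda>x. R `` {x}) (outp K) \<rparr>"

text \<open>Composition \<open>H \<cdot> K\<close>: disjoint union, identify the i-th output of K with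
the i-th input of H; inputs of K, outputs of H.\<close>
definition blg_comp :: "'b blg \<Rightarrow> 'a blg \<Rightarrow> ('a + 'b) set blg" where
  "blg_comp H K =
     (let U = \<lparr> verts = Inl ` verts K \<union> Inr ` verts H,
                edges = map_prod Inl Inl ` edges K \<union> map_prod Inr Inr ` edges H,
                inp = map Inl (inp K), outp = map Inr (outp H) \<rparr>;
          S = {(Inl (outp K ! i), Inr (inp H ! i)) | i. i < length (outp K)};
          R = (Id_on (verts U) \<union> S \<union> S\<inverse>)\<^sup>+
      in blg_quot U R)"

definition blg_inv :: "'v blg \<Rightarrow> 'v blg" where
  "blg_inv K = \<lparr> verts = verts K, edges = edges K, inp = outp K, outp = inp K \<rparr>"

definition N0_blg :: "nat blg" where
  "N0_blg = \<lparr> verts = {}, edges = {}, inp = [], outp = [] \<rparr>"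

definition M_id_blg :: "nat blg" where
  "M_id_blg = \<lparr> verts = {0}, edges = {}, inp = [0], outp = [0] \<rparr>"

definition M_cup_blg :: "nat blg" where
  "M_cup_blg = \<lparr> verts = {0}, edges = {}, inp = [], outp = [0, 0] \<rparr>"

text \<open>A graph category, as a set of bilabelled graphs considered up to isomorphism.\<close>
definition graph_category :: "nat blg set \<Rightarrow> bool" where
  "graph_category C \<longleftrightarrow>
     (\<forall>K\<in>C. blg_wf K)
     \<and> (\<exists>L\<in>C. blg_iso N0_blg L) \<and> (\<exists>L\<in>C. blg_iso M_id_blg L) \<and> (\<exists>L\<in>C. blg_iso M_cup_blg L)
     \<and> (\<forall>K\<in>C. \<forall>H\<in>C. \<exists>L\<in>C. blg_iso (blg_tensor K H) L)
     \<and> (\<forall>K\<in>C. \<forall>H\<in>C. length (outp K) = length (inp H) \<longrightarrow> (\<exists>L\<in>C. blg_iso (blg_comp H K) L))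
     \<and> (\<forall>K\<in>C. \<exists>L\<in>C. blg_iso (blg_inv K) L)"

definition group_theoretical :: "nat blg set \<Rightarrow> bool" where
  "group_theoretical C \<longleftrightarrow> graph_category C \<and>
     (\<forall>K\<in>C. \<forall>R. equiv (verts K) R \<longrightarrow> (\<exists>L\<in>C. blg_iso (blg_quot K R) L))"

text \<open>A graph G on vertices 0..n-1 given by a symmetric edge relation (loops allowed).\<close>
definition homs :: "nat \<Rightarrow> (nat \<times> nat) set \<Rightarrow> 'v blg \<Rightarrow> ('v \<Rightarrow> nat) set" where
  "homs n EG K = {\<phi> \<in> verts K \<rightarrow>\<^sub>E {..<n}. \<forall>(x, y)\<in>edges K. (\<phi> x, \<phi> y) \<in> EG}"

text \<open>Matrix entries [T]_{j i}: j indexes outputs, i indexes inputs.\<close>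
definition hom_mat :: "nat \<Rightarrow> (nat \<times> nat) set \<Rightarrow> 'v blg \<Rightarrow> nat list \<Rightarrow> nat list \<Rightarrow> complex" where
  "hom_mat n EG K j i =
     of_nat (card {\<phi> \<in> homs n EG K. map \<phi> (inp K) = i \<and> map \<phi> (outp K) = j})"

definition inj_hom_mat :: "nat \<Rightarrow> (nat \<times> nat) set \<Rightarrow> 'v blg \<Rightarrow> nat list \<Rightarrow> nat list \<Rightarrow> complex" where
  "inj_hom_mat n EG K j i =
     of_nat (card {\<phi> \<in> homs n EG K. inj_on \<phi> (verts K) \<and> map \<phi> (inp K) = i \<and> map \<phi> (outp K) = j})"

definition cspan :: "(nat list \<Rightarrow> nat list \<Rightarrow> complex) set \<Rightarrow> (nat list \<Rightarrow> nat list \<Rightarrow> complex) set" where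
  "cspan S = {M. \<exists>F c. finite F \<and> F \<subseteq> S \<and> M = (\<lambda>j i. \<Sum>g\<in>F. c g * g j i)}"

end

theory Submission
  imports Defs "HOL-Library.Function_Algebras"
begin

text \<open>Grouping the homomorphisms from \<open>K\<close> to \<open>G\<close> by their kernel, an equivalence relation \<open>R\<close>
on the vertices of \<open>K\<close>, identifies those with kernel \<open>R\<close> with the injective homomorphisms
from \<open>K/R\<close>. Hence the homomorphism matrix of \<open>K\<close> is its injective homomorphism matrix plus
those of the proper quotients \<open>K/R\<close>, \<open>R \<noteq> Id\<close>. In a group-theoretical category each \<open>K/R\<close> is
isomorphic to a member with the same numbers of inputs and outputs and, being proper, with
strictly fewer vertices; so the two families differ by a unitriangular change of basis (ordered
by the number of vertices) and span the same space.\<close>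

lemma sum_fun_apply: "(\<Sum>a\<in>A. f a) x = (\<Sum>a\<in>A. f a x)"
  by (induction A rule: infinite_finite_induct) auto

definition mat_scale :: "'r::comm_ring_1 \<Rightarrow> ('a \<Rightarrow> 'b \<Rightarrow> 'r) \<Rightarrow> 'a \<Rightarrow> 'b \<Rightarrow> 'r" where
  "mat_scale c M = (\<lambda>j i. c * M j i)"

interpretation mat: module mat_scale
  by unfold_locales (auto simp: mat_scale_def fun_eq_iff algebra_simps)

lemma cspan_eq_span: "cspan S = mat.span S"
  unfolding cspan_def mat.span_explicit
  by (auto simp: fun_eq_iff sum_fun_apply mat_scale_def)

context module
begin

lemma span_image_eq_if_unitriangular:
  fixes a b :: "'i \<Rightarrow> 'b" and \<mu> :: "'i \<Rightarrow> nat"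
  assumes "\<And>x. x \<in> I \<Longrightarrow> b x - a x \<in> span (a ` {y \<in> I. \<mu> y < \<mu> x})"
  shows "span (a ` I) = span (b ` I)"
proof (rule antisym)
  have "a x \<in> span (b ` I)" if "x \<in> I" for x
    using that
  proof (induction "\<mu> x" arbitrary: x rule: less_induct)
    case less
    have "span (a ` {y \<in> I. \<mu> y < \<mu> x}) \<subseteq> span (b ` I)"
      using less by (intro span_minimal) (auto simp: subspace_span)
    then have diff: "b x - a x \<in> span (b ` I)"
      using assms less.prems by blast
    have "b x \<in> span (b ` I)"
      using less.prems by (intro span_base) auto
    then have "b x - (b x - a x) \<in> span (b ` I)"
      using diff by (rule span_diff)
    then show ?case
      by simp
  qed
  then show "span (a ` I) \<subseteq> span (b ` I)"
    by (intro span_minimal) (auto simp: subspace_span)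
next
  have "b x \<in> span (a ` I)" if "x \<in> I" for x
  proof -
    have "a x \<in> span (a ` I)"
      using that by (intro span_base) auto
    moreover have "b x - a x \<in> span (a ` I)"
      using assms[OF that] span_mono[of "a ` {y \<in> I. \<mu> y < \<mu> x}" "a ` I"] by blast
    ultimately have "a x + (b x - a x) \<in> span (a ` I)"
      by (rule span_add)
    then show ?thesis
      by simp
  qed
  then show "span (b ` I) \<subseteq> span (a ` I)"
    by (intro span_minimal) (auto simp: subspace_span)
qed

end

definition blg_closed :: "'v blg \<Rightarrow> bool" where
  "blg_closed K \<longleftrightarrow>
     edges K \<subseteq> verts K \<times> verts K \<and> set (inp K) \<subseteq> verts K \<and> set (outp K) \<subseteq> verts K"

lemma blg_wf_imp_closed: "blg_wf K \<Longrightarrow> blg_closed K"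
  unfolding blg_wf_def blg_closed_def by auto

lemma blg_closed_quot: "blg_closed K \<Longrightarrow> blg_closed (blg_quot K R)"
  unfolding blg_closed_def blg_quot_def by (auto intro: quotientI)

definition blg_quotient_map :: "('a \<Rightarrow> 'b) \<Rightarrow> 'a blg \<Rightarrow> 'b blg \<Rightarrow> bool" where
  "blg_quotient_map q K Q \<longleftrightarrow> q ` verts K = verts Q \<and> edges Q = map_prod q q ` edges K
     \<and> inp Q = map q (inp K) \<and> outp Q = map q (outp K)"

lemma blg_quotient_map_quot: "blg_quotient_map (\<lambda>x. R `` {x}) K (blg_quot K R)"
  unfolding blg_quotient_map_def blg_quot_def quotient_def by auto

lemma blg_iso_imp_quotient_map:
  assumes K: "blg_closed K" and L: "blg_closed L" and "blg_iso K L"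
  obtains f where "inj_on f (verts K)" and "blg_quotient_map f K L"
proof -
  obtain f where f: "bij_betw f (verts K) (verts L)"
    and edges_iff: "\<forall>x\<in>verts K. \<forall>y\<in>verts K. (x, y) \<in> edges K \<longleftrightarrow> (f x, f y) \<in> edges L"
    and "map f (inp K) = inp L" and "map f (outp K) = outp L"
    using assms(3) unfolding blg_iso_def by blast
  have "edges L \<subseteq> map_prod f f ` edges K"
  proof
    fix e assume e: "e \<in> edges L"
    have "e \<in> f ` verts K \<times> f ` verts K"
      using e L f by (auto simp: blg_closed_def bij_betw_def)
    then obtain x y where "e = (f x, f y)" and "x \<in> verts K" and "y \<in> verts K"
      by blast
    then show "e \<in> map_prod f f ` edges K"
      using e edges_iff by force
  qed
  moreover have "map_prod f f ` edges K \<subseteq> edges L"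
    using K edges_iff by (fastforce simp: blg_closed_def)
  ultimately have "blg_quotient_map f K L"
    using f \<open>map f (inp K) = inp L\<close> \<open>map f (outp K) = outp L\<close>
    by (auto simp: blg_quotient_map_def bij_betw_def)
  moreover have "inj_on f (verts K)"
    using f by (simp add: bij_betw_def)
  ultimately show ?thesis
    using that by blast
qed

definition ker_on :: "'a set \<Rightarrow> ('a \<Rightarrow> 'b) \<Rightarrow> ('a \<times> 'a) set" where
  "ker_on V f = {(x, y) \<in> V \<times> V. f x = f y}"

lemma equiv_ker_on: "equiv V (ker_on V f)"
  by (rule equivI) (auto simp: ker_on_def refl_on_def sym_def trans_def)

lemma ker_on_eq_Id_on_iff: "ker_on V f = Id_on V \<longleftrightarrow> inj_on f V"
  unfolding ker_on_def inj_on_def by auto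

lemma ker_on_class_map:
  assumes "equiv V R"
  shows "ker_on V (\<lambda>x. R `` {x}) = R"
  using equiv_type[OF assms] eq_equiv_class_iff[OF assms] unfolding ker_on_def by blast

lemma ker_on_compose: "f ` V \<subseteq> W \<Longrightarrow> inj_on g W \<Longrightarrow> ker_on V (compose V g f) = ker_on V f"
  unfolding ker_on_def using inj_on_eq_iff[of g W] by (auto simp: compose_eq image_subset_iff)

definition label_homs ::
    "nat \<Rightarrow> (nat \<times> nat) set \<Rightarrow> 'v blg \<Rightarrow> nat list \<Rightarrow> nat list \<Rightarrow> ('v \<Rightarrow> nat) set" where
  "label_homs n EG K j i = {\<phi> \<in> homs n EG K. map \<phi> (inp K) = i \<and> map \<phi> (outp K) = j}"

lemma hom_mat_eq_card: "hom_mat n EG K j i = of_nat (card (label_homs n EG K j i))"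
  unfolding hom_mat_def label_homs_def by simp

lemma inj_hom_mat_eq_card:
  "inj_hom_mat n EG K j i = of_nat (card {\<phi> \<in> label_homs n EG K j i. inj_on \<phi> (verts K)})"
  unfolding inj_hom_mat_def label_homs_def by (rule arg_cong[where f="\<lambda>A. of_nat (card A)"]) auto

lemma finite_label_homs: "finite (verts K) \<Longrightarrow> finite (label_homs n EG K j i)"
  by (rule finite_subset[of _ "verts K \<rightarrow>\<^sub>E {..<n}"]) (auto simp: label_homs_def homs_def finite_PiE)

lemma compose_in_label_homs:
  assumes q: "blg_quotient_map q K Q" and K: "blg_closed K" and \<psi>: "\<psi> \<in> label_homs n EG Q j i"
  shows "compose (verts K) \<psi> q \<in> label_homs n EG K j i"
proof -
  let ?\<phi> = "compose (verts K) \<psi> q"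
  have q_img: "q ` verts K = verts Q" and eQ: "edges Q = map_prod q q ` edges K"
    and iQ: "inp Q = map q (inp K)" and oQ: "outp Q = map q (outp K)"
    using q by (simp_all add: blg_quotient_map_def)
  have \<psi>_PiE: "\<psi> \<in> verts Q \<rightarrow>\<^sub>E {..<n}" and \<psi>_edges: "\<forall>(w, w')\<in>edges Q. (\<psi> w, \<psi> w') \<in> EG"
    and \<psi>_inp: "map \<psi> (inp Q) = i" and \<psi>_outp: "map \<psi> (outp Q) = j"
    using \<psi> by (auto simp: label_homs_def homs_def)
  have map_\<phi>: "map ?\<phi> xs = map (\<psi> \<circ> q) xs" if "set xs \<subseteq> verts K" for xs
    using that by (auto simp: compose_eq)
  have "?\<phi> \<in> verts K \<rightarrow>\<^sub>E {..<n}"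
    using \<psi>_PiE q_img by (auto simp: compose_def)
  moreover have "(?\<phi> x, ?\<phi> y) \<in> EG" if "(x, y) \<in> edges K" for x y
  proof -
    have "x \<in> verts K" and "y \<in> verts K"
      using K that by (auto simp: blg_closed_def)
    moreover have "(q x, q y) \<in> edges Q"
      using that by (auto simp: eQ)
    ultimately show ?thesis
      using \<psi>_edges by (auto simp: compose_eq)
  qed
  ultimately show ?thesis
    using K \<psi>_inp \<psi>_outp by (auto simp: label_homs_def homs_def map_\<phi> iQ oQ blg_closed_def)
qed

lemma inj_on_compose_surj:
  assumes "q ` V = W"
  shows "inj_on (\<lambda>\<psi>. compose V \<psi> q) (extensional W)"
proof (rule inj_onI)
  fix \<psi>1 \<psi>2
  assume \<psi>: "\<psi>1 \<in> extensional W" "\<psi>2 \<in> extensional W" and eq: "compose V \<psi>1 q = compose V \<psi>2 q"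
  have "\<psi>1 (q x) = \<psi>2 (q x)" if "x \<in> V" for x
    using fun_cong[OF eq, of x] that by (simp add: compose_eq)
  then show "\<psi>1 = \<psi>2"
    using \<psi> assms by (auto intro: extensionalityI)
qed

lemma factor_through_quotient_map:
  assumes q: "blg_quotient_map q K Q" and K: "blg_closed K"
    and \<phi>: "\<phi> \<in> label_homs n EG K j i" and ker: "ker_on (verts K) \<phi> = ker_on (verts K) q"
  obtains \<psi> where "\<psi> \<in> label_homs n EG Q j i" and "inj_on \<psi> (verts Q)"
    and "compose (verts K) \<psi> q = \<phi>"
proof
  let ?V = "verts K"
  define \<psi> where "\<psi> = (\<lambda>w\<in>verts Q. \<phi> (inv_into ?V q w))"
  have q_img: "q ` ?V = verts Q" and eQ: "edges Q = map_prod q q ` edges K"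
    and iQ: "inp Q = map q (inp K)" and oQ: "outp Q = map q (outp K)"
    using q by (simp_all add: blg_quotient_map_def)
  have fibre: "\<phi> x = \<phi> y \<longleftrightarrow> q x = q y" if "x \<in> ?V" "y \<in> ?V" for x y
    using ker that unfolding ker_on_def by blast
  have \<psi>_q: "\<psi> (q x) = \<phi> x" if x: "x \<in> ?V" for x
  proof -
    have "inv_into ?V q (q x) \<in> ?V" and "q (inv_into ?V q (q x)) = q x"
      using x by (auto simp: inv_into_into f_inv_into_f)
    then show ?thesis
      using fibre x q_img by (auto simp: \<psi>_def)
  qed
  have \<phi>_PiE: "\<phi> \<in> ?V \<rightarrow>\<^sub>E {..<n}" and \<phi>_edges: "\<forall>(x, y)\<in>edges K. (\<phi> x, \<phi> y) \<in> EG"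
    and \<phi>_inp: "map \<phi> (inp K) = i" and \<phi>_outp: "map \<phi> (outp K) = j"
    using \<phi> by (auto simp: label_homs_def homs_def)
  have map_\<psi>: "map (\<psi> \<circ> q) xs = map \<phi> xs" if "set xs \<subseteq> ?V" for xs
    using that by (auto simp: \<psi>_q)
  have "\<psi> \<in> verts Q \<rightarrow>\<^sub>E {..<n}"
  proof (rule PiE_I)
    fix w assume "w \<in> verts Q"
    then obtain x where "x \<in> ?V" and "w = q x"
      using q_img by blast
    then show "\<psi> w \<in> {..<n}"
      using \<phi>_PiE by (auto simp: \<psi>_q)
  qed (simp add: \<psi>_def)
  moreover have "\<forall>(w, w')\<in>edges Q. (\<psi> w, \<psi> w') \<in> EG"
    using \<phi>_edges K by (fastforce simp: eQ \<psi>_q blg_closed_def)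
  ultimately show "\<psi> \<in> label_homs n EG Q j i"
    using K \<phi>_inp \<phi>_outp by (simp add: label_homs_def homs_def iQ oQ map_\<psi> blg_closed_def)
  show "inj_on \<psi> (verts Q)"
    using fibre by (auto simp: inj_on_def q_img[symmetric] \<psi>_q)
  show "compose ?V \<psi> q = \<phi>"
    using \<phi>_PiE by (intro extensionalityI[where A = ?V]) (auto simp: compose_eq \<psi>_q PiE_iff)
qed

lemma card_inj_label_homs_quotient_map:
  assumes q: "blg_quotient_map q K Q" and K: "blg_closed K"
  shows "card {\<psi> \<in> label_homs n EG Q j i. inj_on \<psi> (verts Q)}
       = card {\<phi> \<in> label_homs n EG K j i. ker_on (verts K) \<phi> = ker_on (verts K) q}"
proof (rule bij_betw_same_card[OF bij_betw_imageI])
  have "label_homs n EG Q j i \<subseteq> extensional (verts Q)"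
    by (auto simp: label_homs_def homs_def PiE_def)
  then show "inj_on (\<lambda>\<psi>. compose (verts K) \<psi> q) {\<psi> \<in> label_homs n EG Q j i. inj_on \<psi> (verts Q)}"
    using q by (auto simp: blg_quotient_map_def intro: inj_on_subset[OF inj_on_compose_surj])
  show "(\<lambda>\<psi>. compose (verts K) \<psi> q) ` {\<psi> \<in> label_homs n EG Q j i. inj_on \<psi> (verts Q)}
      = {\<phi> \<in> label_homs n EG K j i. ker_on (verts K) \<phi> = ker_on (verts K) q}"
  proof (intro equalityI subsetI)
    fix \<phi> assume "\<phi> \<in> (\<lambda>\<psi>. compose (verts K) \<psi> q) ` {\<psi> \<in> label_homs n EG Q j i. inj_on \<psi> (verts Q)}"
    then obtain \<psi> where \<psi>: "\<psi> \<in> label_homs n EG Q j i" "inj_on \<psi> (verts Q)"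
      and \<phi>_eq: "\<phi> = compose (verts K) \<psi> q"
      by blast
    have "q ` verts K \<subseteq> verts Q"
      using q by (simp add: blg_quotient_map_def)
    then show "\<phi> \<in> {\<phi> \<in> label_homs n EG K j i. ker_on (verts K) \<phi> = ker_on (verts K) q}"
      using compose_in_label_homs[OF q K \<psi>(1)] ker_on_compose[OF _ \<psi>(2)] by (simp add: \<phi>_eq)
  next
    fix \<phi> assume "\<phi> \<in> {\<phi> \<in> label_homs n EG K j i. ker_on (verts K) \<phi> = ker_on (verts K) q}"
    then show "\<phi> \<in> (\<lambda>\<psi>. compose (verts K) \<psi> q) ` {\<psi> \<in> label_homs n EG Q j i. inj_on \<psi> (verts Q)}"
      using factor_through_quotient_map[OF q K] by blast
  qed
qed

lemma card_inj_label_homs_quot: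
  assumes "blg_closed K" and "equiv (verts K) R"
  shows "card {\<psi> \<in> label_homs n EG (blg_quot K R) j i. inj_on \<psi> (verts (blg_quot K R))}
       = card {\<phi> \<in> label_homs n EG K j i. ker_on (verts K) \<phi> = R}"
  using card_inj_label_homs_quotient_map[OF blg_quotient_map_quot assms(1)]
  by (simp add: ker_on_class_map[OF assms(2)])

lemma inj_hom_mat_iso:
  assumes K: "blg_closed K" and L: "blg_closed L" and iso: "blg_iso K L"
  shows "inj_hom_mat n EG L = inj_hom_mat n EG K"
proof -
  obtain f where "inj_on f (verts K)" and q: "blg_quotient_map f K L"
    using blg_iso_imp_quotient_map[OF K L iso] .
  then have ker_f: "ker_on (verts K) f = Id_on (verts K)"
    by (simp add: ker_on_eq_Id_on_iff)
  show ?thesis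
    using card_inj_label_homs_quotient_map[OF q K]
    by (simp add: fun_eq_iff inj_hom_mat_eq_card ker_f ker_on_eq_Id_on_iff)
qed

lemma blg_iso_sizes:
  assumes "blg_iso K L"
  shows "card (verts L) = card (verts K)" and "length (inp L) = length (inp K)"
    and "length (outp L) = length (outp K)"
proof -
  obtain f where f: "bij_betw f (verts K) (verts L)"
    and "inp L = map f (inp K)" and "outp L = map f (outp K)"
    using assms unfolding blg_iso_def by metis
  then show "card (verts L) = card (verts K)" and "length (inp L) = length (inp K)"
    and "length (outp L) = length (outp K)"
    using bij_betw_same_card[OF f] by simp_all
qed

lemma card_label_homs_eq_sum:
  assumes K: "blg_wf K"
  shows "card (label_homs n EG K j i) = card {\<phi> \<in> label_homs n EG K j i. inj_on \<phi> (verts K)}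
     + (\<Sum>R\<in>{R. equiv (verts K) R} - {Id_on (verts K)}.
          card {\<psi> \<in> label_homs n EG (blg_quot K R) j i. inj_on \<psi> (verts (blg_quot K R))})"
proof -
  let ?V = "verts K"
  let ?EQ = "{R. equiv ?V R}"
  let ?fibre = "\<lambda>R. card {\<phi> \<in> label_homs n EG K j i. ker_on ?V \<phi> = R}"
  have closed: "blg_closed K"
    using K by (rule blg_wf_imp_closed)
  have fin: "finite ?V"
    using K by (simp add: blg_wf_def)
  have fin_EQ: "finite ?EQ"
    by (rule finite_subset[of _ "Pow (?V \<times> ?V)"]) (auto simp: fin dest: equiv_type)
  have "equiv ?V (Id_on ?V)"
    by (rule equivI) (auto simp: refl_on_def sym_def trans_def)
  then have Id: "Id_on ?V \<in> ?EQ"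
    by simp
  have "card (label_homs n EG K j i) = (\<Sum>\<phi>\<in>label_homs n EG K j i. 1)"
    by simp
  also have "\<dots> = (\<Sum>R\<in>?EQ. \<Sum>\<phi>\<in>{\<phi> \<in> label_homs n EG K j i. ker_on ?V \<phi> = R}. 1)"
    by (rule sum.group[symmetric]) (auto simp: finite_label_homs fin fin_EQ equiv_ker_on)
  also have "\<dots> = (\<Sum>R\<in>?EQ. ?fibre R)"
    by simp
  also have "\<dots> = ?fibre (Id_on ?V) + (\<Sum>R\<in>?EQ - {Id_on ?V}. ?fibre R)"
    by (rule sum.remove[OF fin_EQ Id])
  also have "\<dots> = card {\<phi> \<in> label_homs n EG K j i. inj_on \<phi> ?V} + (\<Sum>R\<in>?EQ - {Id_on ?V}.
      card {\<psi> \<in> label_homs n EG (blg_quot K R) j i. inj_on \<psi> (verts (blg_quot K R))})"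
    using card_inj_label_homs_quot[OF closed] by (simp add: ker_on_eq_Id_on_iff)
  finally show ?thesis .
qed

lemma hom_mat_eq_inj_hom_mat_plus_quotients:
  assumes "blg_wf K"
  shows "hom_mat n EG K = inj_hom_mat n EG K
     + (\<Sum>R\<in>{R. equiv (verts K) R} - {Id_on (verts K)}. inj_hom_mat n EG (blg_quot K R))"
  by (simp add: fun_eq_iff sum_fun_apply hom_mat_eq_card inj_hom_mat_eq_card
      card_label_homs_eq_sum[OF assms])

lemma card_quotient_less:
  assumes "finite V" and "equiv V R" and "R \<noteq> Id_on V"
  shows "card (V // R) < card V"
proof -
  have "V // R = (\<lambda>x. R `` {x}) ` V"
    by (auto simp: quotient_def)
  moreover have "\<not> inj_on (\<lambda>x. R `` {x}) V"
    using assms(3) ker_on_class_map[OF assms(2)] ker_on_eq_Id_on_iff by metis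
  ultimately show ?thesis
    using assms(1) by (metis card_image_le eq_card_imp_inj_on le_neq_implies_less)
qed

lemma hom_mat_minus_inj_hom_mat_in_span:
  assumes C: "group_theoretical C" and K: "K \<in> C"
  shows "hom_mat n EG K - inj_hom_mat n EG K \<in> mat.span (inj_hom_mat n EG `
     {L \<in> C. length (inp L) = length (inp K) \<and> length (outp L) = length (outp K)
        \<and> card (verts L) < card (verts K)})" (is "_ \<in> mat.span (_ ` ?S)")
proof -
  have wf: "blg_wf L" if "L \<in> C" for L
    using C that by (simp add: group_theoretical_def graph_category_def)
  have "inj_hom_mat n EG (blg_quot K R) \<in> mat.span (inj_hom_mat n EG ` ?S)"
    if R: "R \<in> {R. equiv (verts K) R} - {Id_on (verts K)}" for R
  proof -
    obtain L where L: "L \<in> C" and iso: "blg_iso (blg_quot K R) L"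
      using C K R unfolding group_theoretical_def by blast
    have "inj_hom_mat n EG L = inj_hom_mat n EG (blg_quot K R)"
      using wf[OF K] wf[OF L] iso
      by (intro inj_hom_mat_iso blg_closed_quot) (auto simp: blg_wf_imp_closed)
    moreover have "card (verts L) < card (verts K)"
      using blg_iso_sizes(1)[OF iso] card_quotient_less[of "verts K" R] wf[OF K] R
      by (simp add: blg_quot_def blg_wf_def)
    ultimately show ?thesis
      using L blg_iso_sizes(2,3)[OF iso]
      by (intro mat.span_base) (auto simp: blg_quot_def image_iff)
  qed
  then have "(\<Sum>R\<in>{R. equiv (verts K) R} - {Id_on (verts K)}. inj_hom_mat n EG (blg_quot K R))
      \<in> mat.span (inj_hom_mat n EG ` ?S)"
    by (rule mat.span_sum)
  then show ?thesis
    by (simp add: hom_mat_eq_inj_hom_mat_plus_quotients[OF wf[OF K]])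
qed

theorem proposition4p9:
  fixes n :: nat and EG :: "(nat \<times> nat) set" and C :: "nat blg set" and k l :: nat
  assumes "EG \<subseteq> {..<n} \<times> {..<n}" and "sym EG"
    and "group_theoretical C"
  shows "cspan {inj_hom_mat n EG K | K. K \<in> C \<and> length (inp K) = k \<and> length (outp K) = l}
       = cspan {hom_mat n EG K | K. K \<in> C \<and> length (inp K) = k \<and> length (outp K) = l}"
proof -
  let ?I = "{K \<in> C. length (inp K) = k \<and> length (outp K) = l}"
  have "hom_mat n EG K - inj_hom_mat n EG K
      \<in> mat.span (inj_hom_mat n EG ` {L \<in> ?I. card (verts L) < card (verts K)})" if "K \<in> ?I" for K
    using hom_mat_minus_inj_hom_mat_in_span[OF assms(3), of K n EG] that
    by (simp add: conj_assoc)
  then have "mat.span (inj_hom_mat n EG ` ?I) = mat.span (hom_mat n EG ` ?I)"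
    by (rule mat.span_image_eq_if_unitriangular)
  moreover have "{f K | K. K \<in> C \<and> length (inp K) = k \<and> length (outp K) = l} = f ` ?I"
    for f :: "nat blg \<Rightarrow> nat list \<Rightarrow> nat list \<Rightarrow> complex"
    by blast
  ultimately show ?thesis
    by (simp add: cspan_eq_span)
qed

end
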